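(* (a) If $p\ne0$ and $(p',u')=\Phi(p,u)$, then $p'u'+u'=pu+p$. (b) Consequently, for any trajectory $(p_j,u_j)=\Phi(p_{j-1},u_{j-1})$ one has $p_ju_j+u_j=p_{j-1}u_{j-1}+p_{j-1}$. (c) For the trajectory $T_n$ (with coordinates $(p_j,u_j)$, $0\le j\le n$) and $1\le\ell\le n$, $\sum_{j=1}^{\ell}(p_{j-1}-u_j)=p_\ell u_\ell$.
   Context: $\Phi$ is the partial map of $\mathbb{R}^2$ defined for $p\ne0$ by $\Phi(p,u)=\bigl(p^2(u+1)-1,\ 1/p\bigr)$. For $n\ge1$, the trajectory $T_n$ is the (existing and unique) finite sequence $(p_j,u_j)$, $j=0,\dots,n$, with $(p_j,u_j)=\Phi(p_{j-1},u_{j-1})$ for $1\le j\le n$, $u_0=0$, $p_n=0$, and $p_j>0$ for $0\le j\le n-1$. *)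

theory Defs
  imports Complex_Main
begin

text \<open>The partial map Phi; it is only meaningful for p \<noteq> 0, and every use below
  is guarded by that condition.\<close>
definition Phi :: "real \<times> real \<Rightarrow> real \<times> real" where
  "Phi pu = (case pu of (p, u) \<Rightarrow> (p^2 * (u + 1) - 1, 1 / p))"

definition is_traj :: "nat \<Rightarrow> (nat \<Rightarrow> real) \<Rightarrow> (nat \<Rightarrow> real) \<Rightarrow> bool" where
  "is_traj n p u \<longleftrightarrow> n \<ge> 1 \<and> u 0 = 0 \<and> p n = 0 \<and> (\<forall>j<n. p j > 0) \<and>
     (\<forall>j. 1 \<le> j \<and> j \<le> n \<longrightarrow> (p j, u j) = Phi (p (j - 1), u (j - 1)))"

end

theory Submission
  imports Defs
begin

lemma Phi_conserves:
  fixes p u :: real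
  assumes "p \<noteq> 0" and "(p', u') = Phi (p, u)"
  shows "p' * u' + u' = p * u + p"
proof -
  from assms(2) have p': "p' = p^2 * (u + 1) - 1" and u': "u' = 1 / p"
    by (auto simp: Phi_def)
  have "p' * u' + u' = (p' + 1) * u'" by (simp add: algebra_simps)
  also have "\<dots> = p^2 * (u + 1) / p" using p' u' by simp
  also have "\<dots> = p * u + p" using assms(1) by (simp add: power2_eq_square field_simps)
  finally show ?thesis .
qed

text \<open>By \<open>Phi_conserves\<close> each summand \<open>p (j - 1) - u j\<close> equals
  \<open>p j * u j - p (j - 1) * u (j - 1)\<close>, so the sum telescopes.\<close>
lemma sum_Phi_orbit:
  fixes p u :: "nat \<Rightarrow> real"
  assumes "u 0 = 0"
    and nonzero: "\<And>j. j < l \<Longrightarrow> p j \<noteq> 0"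
    and step: "\<And>j. j < l \<Longrightarrow> (p (Suc j), u (Suc j)) = Phi (p j, u j)"
  shows "(\<Sum>j=1..l. p (j - 1) - u j) = p l * u l"
  using nonzero step
proof (induction l)
  case 0
  then show ?case using assms(1) by simp
next
  case (Suc l)
  have "(\<Sum>j=1..Suc l. p (j - 1) - u j) = p l * u l + (p l - u (Suc l))"
    using Suc by simp
  also have "\<dots> = p (Suc l) * u (Suc l)"
    using Phi_conserves[OF Suc.prems(1) Suc.prems(2)] by fastforce
  finally show ?case .
qed

lemma is_traj_step:
  assumes "is_traj n p u" and "j < n"
  shows "p j \<noteq> 0" and "(p (Suc j), u (Suc j)) = Phi (p j, u j)"
  using assms unfolding is_traj_def
  by (metis less_irrefl, metis Suc_leI diff_Suc_1 le_add1 plus_1_eq_Suc)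

theorem lemma1:
  shows "(\<forall>(p::real) u p' u'. p \<noteq> 0 \<and> (p', u') = Phi (p, u) \<longrightarrow> p' * u' + u' = p * u + p)
    \<and> (\<forall>(p::nat \<Rightarrow> real) u j. 1 \<le> j \<and> p (j - 1) \<noteq> 0 \<and> (p j, u j) = Phi (p (j - 1), u (j - 1))
          \<longrightarrow> p j * u j + u j = p (j - 1) * u (j - 1) + p (j - 1))
    \<and> (\<forall>n (p::nat \<Rightarrow> real) u l. is_traj n p u \<and> 1 \<le> l \<and> l \<le> n
          \<longrightarrow> (\<Sum>j=1..l. p (j - 1) - u j) = p l * u l)"
proof (intro conjI allI impI)
  show "p' * u' + u' = p * u + p"
    if "p \<noteq> 0 \<and> (p', u') = Phi (p, u)" for p u p' u' :: real
    using that Phi_conserves by blast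
  show "p j * u j + u j = p (j - 1) * u (j - 1) + p (j - 1)"
    if "1 \<le> j \<and> p (j - 1) \<noteq> 0 \<and> (p j, u j) = Phi (p (j - 1), u (j - 1))"
    for p u :: "nat \<Rightarrow> real" and j
    using that Phi_conserves by blast
  show "(\<Sum>j=1..l. p (j - 1) - u j) = p l * u l"
    if "is_traj n p u \<and> 1 \<le> l \<and> l \<le> n" for n p u l
  proof (rule sum_Phi_orbit)
    show "u 0 = 0" using that by (simp add: is_traj_def)
  qed (use that is_traj_step in auto)
qed

end
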